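(* There exist constants $C > 0$ and $\epsilon_0 \in (0, 1/2)$ such that for all $\epsilon \in (0, \epsilon_0)$ and all $u \in \mathrm{H}^{1/2}_w(\mathbb{R})$ one has $u \in \mathrm{H}^{1/2-\epsilon}(\mathbb{R})$ and $$\|u\|_{\mathrm{L}^2} + |u|_{\mathrm{H}^{1/2-\epsilon}} \leq C \epsilon^{-1/2}\left(\|u\|_{\mathrm{L}^2} + |u|_{\mathrm{H}^{1/2}_w}\right);$$ that is, the canonical injection $\mathrm{H}^{1/2}_w(\mathbb{R}) \to \mathrm{H}^{1/2-\epsilon}(\mathbb{R})$ has norm of order $\epsilon^{-1/2}$ for small $\epsilon$.
   Context: For $s \in ]0,1[$, the Slobodetski seminorm is $|u|_{\mathrm{H}^{s}}^2 = \iint_{\mathbb{R}^2} \frac{|u(x+y)-u(x)|^2}{|y|^{1+2s}}\,\mathrm{d}x\,\mathrm{d}y$, and $\mathrm{H}^s(\mathbb{R})$ is equipped with the norm $\|u\|_{\mathrm{L}^2} + |u|_{\mathrm{H}^s}$. The space $\mathrm{H}^{1/2}_w(\mathbb{R})$ consists of $u \in \mathrm{L}^2(\mathbb{R})$ for which there is $C \geq 0$ with $\|u - u(\cdot+y)\|_{\mathrm{L}^2} \leq C|y|^{1/2}$ for all $y \in \mathbb{R}$; the best such $C$ is denoted $|u|_{\mathrm{H}^{1/2}_w}$, and the norm is $\|u\|_{\mathrm{L}^2} + |u|_{\mathrm{H}^{1/2}_w}$. *)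

theory Defs
  imports "HOL-Analysis.Analysis"
begin

definition L2 :: "(real \<Rightarrow> real) set" where
  "L2 = {u. u \<in> borel_measurable lborel \<and> integrable lborel (\<lambda>x. (u x)\<^sup>2)}"

definition L2_norm :: "(real \<Rightarrow> real) \<Rightarrow> real" where
  "L2_norm u = sqrt (LINT x|lborel. (u x)\<^sup>2)"

definition slob_sq :: "real \<Rightarrow> (real \<Rightarrow> real) \<Rightarrow> ennreal" where
  "slob_sq s u = (\<integral>\<^sup>+ p. ennreal ((u (fst p + snd p) - u (fst p))\<^sup>2 / \<bar>snd p\<bar> powr (1 + 2 * s))
                      \<partial>(lborel :: (real \<times> real) measure))"

definition Hs :: "real \<Rightarrow> (real \<Rightarrow> real) set" where
  "Hs s = {u. u \<in> L2 \<and> slob_sq s u < \<infinity>}"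

definition Hs_semi :: "real \<Rightarrow> (real \<Rightarrow> real) \<Rightarrow> real" where
  "Hs_semi s u = sqrt (enn2real (slob_sq s u))"

definition Hw_ok :: "(real \<Rightarrow> real) \<Rightarrow> real \<Rightarrow> bool" where
  "Hw_ok u C \<longleftrightarrow> C \<ge> 0 \<and> (\<forall>y. L2_norm (\<lambda>x. u x - u (x + y)) \<le> C * \<bar>y\<bar> powr (1/2))"

definition Hw :: "(real \<Rightarrow> real) set" where
  "Hw = {u. u \<in> L2 \<and> (\<exists>C. Hw_ok u C)}"

definition Hw_semi :: "(real \<Rightarrow> real) \<Rightarrow> real" where
  "Hw_semi u = Inf {C. Hw_ok u C}"

end

theory Submission imports Defs begin

text \<open>Write D(y) for the squared L2 norm of u - u(. + y). By Tonelli the squared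
H^(1/2 - e) seminorm of u is the integral of D(y) / |y|^(2 - 2e) over y. For |y| <= 1 the weak
bound D(y) <= |u|_w^2 |y| leaves the weight |y|^(2e - 1), whose integral is 1/e; for |y| >= 1 the
trivial bound D(y) <= 4 |u|_L2^2 meets the weight |y|^(2e - 2), integrable uniformly in small e.
Hence the squared seminorm is at most |u|_w^2 / e + 16 |u|_L2^2.\<close>

lemma lborel_integrable_translate:
  fixes f :: "real \<Rightarrow> real"
  assumes "integrable lborel f"
  shows "integrable lborel (\<lambda>x. f (x + y))"
  using lborel_integrable_real_affine[OF assms, of 1 y] by (simp add: add.commute)

lemma lborel_integral_translate:
  fixes f :: "real \<Rightarrow> real"
  shows "(LINT x|lborel. f (x + y)) = (LINT x|lborel. f x)"
  using lborel_integral_real_affine[of 1 f y] by (simp add: add.commute)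

lemma L2_translate_diff_sq:
  assumes "u \<in> L2"
  shows "integrable lborel (\<lambda>x. (u x - u (x + y))\<^sup>2)"
    and "(LINT x|lborel. (u x - u (x + y))\<^sup>2) \<le> 4 * (LINT x|lborel. (u x)\<^sup>2)"
proof -
  have [measurable]: "u \<in> borel_measurable borel" using assms by (simp add: L2_def)
  have int_sq: "integrable lborel (\<lambda>x. (u x)\<^sup>2)" using assms by (simp add: L2_def)
  have int_bound: "integrable lborel (\<lambda>x. 2 * (u x)\<^sup>2 + 2 * (u (x + y))\<^sup>2)"
    using int_sq lborel_integrable_translate[OF int_sq] by simp
  have diff_sq_le: "(a - b)\<^sup>2 \<le> 2 * a\<^sup>2 + 2 * b\<^sup>2" for a b :: real
    by (smt (verit) sum_squares_ge_zero power2_diff power2_sum zero_le_power2)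
  show int_diff: "integrable lborel (\<lambda>x. (u x - u (x + y))\<^sup>2)"
    by (rule Bochner_Integration.integrable_bound[OF int_bound]) (auto simp: diff_sq_le)
  have "(LINT x|lborel. (u x - u (x + y))\<^sup>2) \<le> (LINT x|lborel. 2 * (u x)\<^sup>2 + 2 * (u (x + y))\<^sup>2)"
    by (rule integral_mono[OF int_diff int_bound]) (simp add: diff_sq_le)
  also have "\<dots> = 4 * (LINT x|lborel. (u x)\<^sup>2)"
    using int_sq lborel_integrable_translate[OF int_sq] lborel_integral_translate[of "\<lambda>x. (u x)\<^sup>2" y]
    by simp
  finally show "(LINT x|lborel. (u x - u (x + y))\<^sup>2) \<le> 4 * (LINT x|lborel. (u x)\<^sup>2)" .
qed

lemma Hw_ok_Hw_semi:
  assumes "u \<in> Hw"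
  shows "Hw_ok u (Hw_semi u)"
proof -
  obtain C where "Hw_ok u C" using assms by (auto simp: Hw_def)
  then have ne: "{C. Hw_ok u C} \<noteq> {}" by auto
  have nonneg: "0 \<le> Hw_semi u" unfolding Hw_semi_def
    by (rule cInf_greatest[OF ne]) (auto simp: Hw_ok_def)
  show ?thesis unfolding Hw_ok_def
  proof (intro conjI nonneg allI)
    fix y :: real
    show "L2_norm (\<lambda>x. u x - u (x + y)) \<le> Hw_semi u * \<bar>y\<bar> powr (1/2)"
    proof (cases "y = 0")
      case True
      then show ?thesis by (simp add: L2_norm_def)
    next
      case False
      then have pos: "\<bar>y\<bar> powr (1/2) > 0" by simp
      have "L2_norm (\<lambda>x. u x - u (x + y)) / \<bar>y\<bar> powr (1/2) \<le> Hw_semi u"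
        unfolding Hw_semi_def
        by (rule cInf_greatest[OF ne]) (auto simp: Hw_ok_def pos divide_le_eq)
      then show ?thesis using pos by (simp add: divide_le_eq)
    qed
  qed
qed

lemma Hw_translate_diff_sq_le:
  assumes "u \<in> Hw"
  shows "(LINT x|lborel. (u x - u (x + y))\<^sup>2) \<le> (Hw_semi u)\<^sup>2 * \<bar>y\<bar>"
proof -
  let ?D = "LINT x|lborel. (u x - u (x + y))\<^sup>2"
  have "0 \<le> ?D" by (rule integral_nonneg_AE) simp
  moreover have "sqrt ?D \<le> Hw_semi u * \<bar>y\<bar> powr (1/2)"
    using Hw_ok_Hw_semi[OF assms] by (simp add: Hw_ok_def L2_norm_def)
  ultimately have "(sqrt ?D)\<^sup>2 \<le> (Hw_semi u * \<bar>y\<bar> powr (1/2))\<^sup>2"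
    by (intro power_mono) simp_all
  moreover have "(\<bar>y\<bar> powr (1/2))\<^sup>2 = \<bar>y\<bar>"
    by (simp add: powr_powr flip: powr_realpow')
  ultimately show ?thesis using \<open>0 \<le> ?D\<close> by (simp add: power_mult_distrib)
qed

lemma slob_sq_eq_nn_integral_translate_diff:
  assumes "u \<in> L2"
  shows "slob_sq s u
    = (\<integral>\<^sup>+y. ennreal ((LINT x|lborel. (u x - u (x + y))\<^sup>2) / \<bar>y\<bar> powr (1 + 2 * s)) \<partial>lborel)"
proof -
  have [measurable]: "u \<in> borel_measurable borel" using assms by (simp add: L2_def)
  have meas: "(\<lambda>p::real \<times> real. ennreal ((u (fst p + snd p) - u (fst p))\<^sup>2 / \<bar>snd p\<bar> powr (1 + 2 * s)))
      \<in> borel_measurable (lborel \<Otimes>\<^sub>M lborel)" by measurable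
  have inner: "(\<integral>\<^sup>+x. ennreal ((u (x + y) - u x)\<^sup>2 / a) \<partial>lborel)
      = ennreal ((LINT x|lborel. (u x - u (x + y))\<^sup>2) / a)" if "0 \<le> a" for a y
    using that L2_translate_diff_sq(1)[OF assms]
    by (subst nn_integral_eq_integral) (auto simp: power2_commute)
  have "slob_sq s u = (\<integral>\<^sup>+y. \<integral>\<^sup>+x. ennreal ((u (x + y) - u x)\<^sup>2 / \<bar>y\<bar> powr (1 + 2 * s)) \<partial>lborel \<partial>lborel)"
    unfolding slob_sq_def lborel_prod[symmetric] using lborel_pair.nn_integral_snd[OF meas] by simp
  then show ?thesis by (simp add: inner)
qed

text \<open>Majorant of D(y) / |y|^(2 - 2e) on y >= 0 built from the two bounds on D. It vanishes
for y < 0, so its symmetrization k(y) + k(-y) majorizes on the whole line.\<close>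

definition split_power_kernel :: "real \<Rightarrow> real \<Rightarrow> real \<Rightarrow> real \<Rightarrow> ennreal" where
  "split_power_kernel e A B y =
     ennreal (A * y powr (2 * e - 1)) * indicator {0..1} y + ennreal (B * y powr (2 * e - 2)) * indicator {1..} y"

lemma split_power_kernel_measurable [measurable]: "split_power_kernel e A B \<in> borel_measurable borel"
  unfolding split_power_kernel_def by measurable

lemma div_powr_le_split_power_kernel:
  fixes D A B e y :: real
  assumes "0 \<le> D" "D \<le> A * \<bar>y\<bar>" "D \<le> B"
  shows "ennreal (D / \<bar>y\<bar> powr (2 - 2 * e))
    \<le> split_power_kernel e A B y + split_power_kernel e A B (-y)"
proof -
  have "ennreal (D / \<bar>y\<bar> powr (2 - 2 * e)) \<le> split_power_kernel e A B \<bar>y\<bar>"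
  proof (cases "y = 0")
    case True
    then show ?thesis by simp
  next
    case False
    then have pos: "\<bar>y\<bar> powr (2 - 2 * e) > 0" by simp
    show ?thesis
    proof (cases "\<bar>y\<bar> \<le> 1")
      case True
      have "D / \<bar>y\<bar> powr (2 - 2 * e) \<le> A * \<bar>y\<bar> powr 1 / \<bar>y\<bar> powr (2 - 2 * e)"
        using assms(2) pos \<open>y \<noteq> 0\<close> by (simp add: divide_right_mono)
      also have "\<dots> = A * \<bar>y\<bar> powr (2 * e - 1)"
        by (simp only: powr_diff[symmetric] flip: times_divide_eq_right) simp
      finally have "ennreal (D / \<bar>y\<bar> powr (2 - 2 * e)) \<le> ennreal (A * \<bar>y\<bar> powr (2 * e - 1))"
        by (rule ennreal_leI)
      also have "\<dots> \<le> split_power_kernel e A B \<bar>y\<bar>"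
        using True by (simp add: split_power_kernel_def indicator_def)
      finally show ?thesis .
    next
      case False
      have "D / \<bar>y\<bar> powr (2 - 2 * e) \<le> B / \<bar>y\<bar> powr (2 - 2 * e)"
        using assms(3) pos by (simp add: divide_right_mono)
      also have "\<dots> = B * \<bar>y\<bar> powr (2 * e - 2)"
        by (simp add: divide_inverse powr_minus[symmetric])
      finally have "ennreal (D / \<bar>y\<bar> powr (2 - 2 * e)) \<le> ennreal (B * \<bar>y\<bar> powr (2 * e - 2))"
        by (rule ennreal_leI)
      also have "\<dots> \<le> split_power_kernel e A B \<bar>y\<bar>"
        using False by (simp add: split_power_kernel_def indicator_def)
      finally show ?thesis .
    qed
  qed
  also have "\<dots> \<le> split_power_kernel e A B y + split_power_kernel e A B (-y)"
    by (cases "y \<ge> 0") (auto simp: split_power_kernel_def indicator_def)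
  finally show ?thesis .
qed

lemma nn_integral_split_power_kernel:
  assumes "0 < e" "e < 1/2" "0 \<le> A" "0 \<le> B"
  shows "(\<integral>\<^sup>+y. split_power_kernel e A B y \<partial>lborel) = ennreal (A / (2 * e)) + ennreal (B / (1 - 2 * e))"
proof -
  have "((\<lambda>y. A * y powr (2 * e - 1)) has_integral (A / (2 * e))) {0..1}"
    using has_integral_mult_right[OF has_integral_powr_from_0[of "2 * e - 1" 1], of A] assms by simp
  then have near: "(\<integral>\<^sup>+y. ennreal (A * y powr (2 * e - 1)) * indicator {0..1} y \<partial>lborel)
      = ennreal (A / (2 * e))"
    by (rule nn_integral_has_integral_lebesgue'[rotated]) (use assms in simp)
  have "((\<lambda>y. B * y powr (2 * e - 2)) has_integral (B * (- (1 powr (2 * e - 2 + 1)) / (2 * e - 2 + 1)))) {1..}"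
    using has_integral_mult_right[OF has_integral_powr_to_inf[of "2 * e - 2" 1], of B] assms by simp
  moreover have "B * (- (1 powr (2 * e - 2 + 1)) / (2 * e - 2 + 1)) = B / (1 - 2 * e)"
    using assms by (simp add: field_simps)
  ultimately have "((\<lambda>y. B * y powr (2 * e - 2)) has_integral (B / (1 - 2 * e))) {1..}"
    by simp
  then have far: "(\<integral>\<^sup>+y. ennreal (B * y powr (2 * e - 2)) * indicator {1..} y \<partial>lborel)
      = ennreal (B / (1 - 2 * e))"
    by (rule nn_integral_has_integral_lebesgue'[rotated]) (use assms in simp)
  show ?thesis
    unfolding split_power_kernel_def near[symmetric] far[symmetric] by (rule nn_integral_add) measurable
qed

lemma nn_integral_split_power_kernel_symmetrized:
  assumes "0 < e" "e < 1/2" "0 \<le> A" "0 \<le> B"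
  shows "(\<integral>\<^sup>+y. split_power_kernel e A B y + split_power_kernel e A B (-y) \<partial>lborel)
    = ennreal (A / e + 2 * B / (1 - 2 * e))"
proof -
  have reflect: "(\<integral>\<^sup>+y. split_power_kernel e A B (-y) \<partial>lborel) = (\<integral>\<^sup>+y. split_power_kernel e A B y \<partial>lborel)"
    using nn_integral_real_affine[OF split_power_kernel_measurable[of e A B], of "-1" 0] by simp
  have nonneg: "0 \<le> A / (2 * e)" "0 \<le> B / (1 - 2 * e)" using assms by auto
  have "(\<integral>\<^sup>+y. split_power_kernel e A B y + split_power_kernel e A B (-y) \<partial>lborel)
      = (\<integral>\<^sup>+y. split_power_kernel e A B y \<partial>lborel) + (\<integral>\<^sup>+y. split_power_kernel e A B (-y) \<partial>lborel)"
    by (rule nn_integral_add) measurable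
  also have "\<dots> = ennreal ((A / (2 * e) + B / (1 - 2 * e)) + (A / (2 * e) + B / (1 - 2 * e)))"
    unfolding reflect nn_integral_split_power_kernel[OF assms]
    using nonneg by (simp only: ennreal_plus add_nonneg_nonneg)
  also have "(A / (2 * e) + B / (1 - 2 * e)) + (A / (2 * e) + B / (1 - 2 * e)) = A / e + 2 * B / (1 - 2 * e)"
    using assms by (simp add: add_divide_distrib[symmetric])
  finally show ?thesis .
qed

lemma slob_sq_Hw_bound:
  assumes u: "u \<in> Hw" and "0 < e" "e < 1/2"
  shows "slob_sq (1/2 - e) u
    \<le> ennreal ((Hw_semi u)\<^sup>2 / e + 8 * (LINT x|lborel. (u x)\<^sup>2) / (1 - 2 * e))"
proof -
  define I where "I = (LINT x|lborel. (u x)\<^sup>2)"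
  let ?k = "split_power_kernel e ((Hw_semi u)\<^sup>2) (4 * I)"
  have uL: "u \<in> L2" using u by (simp add: Hw_def)
  have "0 \<le> I" unfolding I_def by (rule integral_nonneg_AE) simp
  have exponent: "1 + 2 * (1/2 - e) = 2 - 2 * e" by simp
  have "slob_sq (1/2 - e) u
      = (\<integral>\<^sup>+y. ennreal ((LINT x|lborel. (u x - u (x + y))\<^sup>2) / \<bar>y\<bar> powr (2 - 2 * e)) \<partial>lborel)"
    unfolding slob_sq_eq_nn_integral_translate_diff[OF uL] exponent ..
  also have "\<dots> \<le> (\<integral>\<^sup>+y. ?k y + ?k (-y) \<partial>lborel)"
  proof (rule nn_integral_mono, rule div_powr_le_split_power_kernel)
    fix y
    show "0 \<le> (LINT x|lborel. (u x - u (x + y))\<^sup>2)" by (rule integral_nonneg_AE) simp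
    show "(LINT x|lborel. (u x - u (x + y))\<^sup>2) \<le> (Hw_semi u)\<^sup>2 * \<bar>y\<bar>"
      by (rule Hw_translate_diff_sq_le[OF u])
    show "(LINT x|lborel. (u x - u (x + y))\<^sup>2) \<le> 4 * I"
      unfolding I_def by (rule L2_translate_diff_sq(2)[OF uL])
  qed
  also have "\<dots> = ennreal ((Hw_semi u)\<^sup>2 / e + 8 * I / (1 - 2 * e))"
    using nn_integral_split_power_kernel_symmetrized[OF assms(2,3) zero_le_power2, of "4 * I"]
      \<open>0 \<le> I\<close> by simp
  finally show ?thesis unfolding I_def .
qed

lemma Hs_semi_Hw_bound:
  assumes u: "u \<in> Hw" and e: "0 < e" "e \<le> 1/4"
  shows "u \<in> Hs (1/2 - e)" and "Hs_semi (1/2 - e) u \<le> Hw_semi u / sqrt e + 4 * L2_norm u"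
proof -
  define W where "W = Hw_semi u"
  define I where "I = (LINT x|lborel. (u x)\<^sup>2)"
  have uL: "u \<in> L2" using u by (simp add: Hw_def)
  have "0 \<le> I" unfolding I_def by (rule integral_nonneg_AE) simp
  have "0 \<le> W" using Hw_ok_Hw_semi[OF u] by (simp add: Hw_ok_def W_def)
  define B where "B = W\<^sup>2 / e + 8 * I / (1 - 2 * e)"
  have "0 \<le> B" using e \<open>0 \<le> I\<close> unfolding B_def by auto
  have slob_le: "slob_sq (1/2 - e) u \<le> ennreal B"
    unfolding B_def W_def I_def by (rule slob_sq_Hw_bound[OF u]) (use e in auto)
  then show "u \<in> Hs (1/2 - e)"
    using uL by (simp add: Hs_def le_less_trans[OF slob_le])
  have "Hs_semi (1/2 - e) u \<le> sqrt B"
    using enn2real_mono[OF slob_le] \<open>0 \<le> B\<close> unfolding Hs_semi_def by simp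
  also have "\<dots> \<le> sqrt (W\<^sup>2 / e + 16 * I)"
  proof -
    have "8 * I / (1 - 2 * e) \<le> 16 * I"
      using e \<open>0 \<le> I\<close> by (simp add: field_simps) (intro mult_left_le; linarith)
    then show ?thesis unfolding B_def by simp
  qed
  also have "\<dots> \<le> sqrt (W\<^sup>2 / e) + sqrt (16 * I)"
    by (rule sqrt_add_le_add_sqrt) (use e \<open>0 \<le> I\<close> in auto)
  also have "\<dots> = W / sqrt e + 4 * L2_norm u"
    using \<open>0 \<le> W\<close> by (simp add: real_sqrt_divide real_sqrt_mult L2_norm_def I_def)
  finally show "Hs_semi (1/2 - e) u \<le> Hw_semi u / sqrt e + 4 * L2_norm u"
    unfolding W_def .
qed

theorem proposition4:
  shows "\<exists>C>0. \<exists>\<epsilon>0. 0 < \<epsilon>0 \<and> \<epsilon>0 < 1/2 \<and>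
           (\<forall>\<epsilon>. 0 < \<epsilon> \<and> \<epsilon> < \<epsilon>0 \<longrightarrow>
              (\<forall>u \<in> Hw. u \<in> Hs (1/2 - \<epsilon>) \<and>
                 L2_norm u + Hs_semi (1/2 - \<epsilon>) u
                   \<le> C * \<epsilon> powr (-1/2) * (L2_norm u + Hw_semi u)))"
proof -
  have "L2_norm u + Hs_semi (1/2 - e) u \<le> 5 * e powr (-1/2) * (L2_norm u + Hw_semi u)"
    if u: "u \<in> Hw" and e: "0 < e" "e \<le> 1/4" for e u
  proof -
    let ?L = "L2_norm u" and ?W = "Hw_semi u"
    have "0 \<le> ?L" by (simp add: L2_norm_def)
    have "0 \<le> ?W" using Hw_ok_Hw_semi[OF u] by (simp add: Hw_ok_def)
    have "0 < sqrt e" "sqrt e \<le> 1" using e by auto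
    then have "?L \<le> ?L / sqrt e" using \<open>0 \<le> ?L\<close> by (simp add: le_divide_eq mult_left_le)
    moreover have "0 \<le> ?W / sqrt e" using \<open>0 \<le> ?W\<close> \<open>0 < sqrt e\<close> by simp
    moreover have "e powr (-1/2) = 1 / sqrt e"
      using e by (simp add: powr_minus_divide powr_half_sqrt)
    ultimately show ?thesis
      using Hs_semi_Hw_bound(2)[OF u e] by (simp add: distrib_left add_divide_distrib)
  qed
  then show ?thesis
    by (intro exI[of _ 5] conjI exI[of _ "1/4"]) (auto intro: Hs_semi_Hw_bound(1))
qed

end
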